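(* Let $G(z,y)$ be the bivariate generating function whose coefficient of $z^ny^k$ is the number of $\mathbf{3}$-free naturally labelled posets on $[n]$ with no isolated elements and exactly $k$ minimal elements. Here $n\ge0$, and the empty poset contributes $1$. Then $$G(z,y)=\frac{1}{1-z^2y^2}\left(1-zy+z\left(G\!\left(\frac{z}{1-zy},\,2y\right)-(1-y)(1-zy)\,G(z,y)\right)\right),$$ and $$G(z,y)=\frac{1}{1+zy}\sum_{k\ge0}\frac{z^ky^k}{\prod_{i=1}^k\big(1-(2^i-1-y)z\big)}.$$
   Context: A partial order $\preceq$ on $[n]$ is naturally labelled if $x\prec y$ implies $x<y$. It is $\mathbf{3}$-free if there are no three elements $x\prec y\prec z$. An element is isolated if it is comparable to no other element. *)

theory Defs
  imports "HOL-Computational_Algebra.Formal_Power_Series"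
begin

text \<open>Posets on [n] = {1..n} are represented by their (reflexive) order relation R.\<close>

definition nat_labelled :: "(nat \<times> nat) set \<Rightarrow> bool" where
  "nat_labelled R \<longleftrightarrow> (\<forall>x y. (x, y) \<in> R \<and> x \<noteq> y \<longrightarrow> x < y)"

definition three_free :: "(nat \<times> nat) set \<Rightarrow> bool" where
  "three_free R \<longleftrightarrow> \<not> (\<exists>x y z. (x, y) \<in> R \<and> x \<noteq> y \<and> (y, z) \<in> R \<and> y \<noteq> z)"

definition isolated :: "nat set \<Rightarrow> (nat \<times> nat) set \<Rightarrow> nat \<Rightarrow> bool" where
  "isolated A R x \<longleftrightarrow> x \<in> A \<and> (\<forall>y\<in>A. y \<noteq> x \<longrightarrow> (x, y) \<notin> R \<and> (y, x) \<notin> R)"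

definition minimal_elems :: "nat set \<Rightarrow> (nat \<times> nat) set \<Rightarrow> nat set" where
  "minimal_elems A R = {x \<in> A. \<forall>y\<in>A. (y, x) \<in> R \<longrightarrow> y = x}"

definition cnt :: "nat \<Rightarrow> nat \<Rightarrow> nat" where
  "cnt n k = card {R. R \<subseteq> {1..n} \<times> {1..n} \<and> partial_order_on {1..n} R \<and> nat_labelled R
      \<and> three_free R \<and> (\<forall>x\<in>{1..n}. \<not> isolated {1..n} R x)
      \<and> card (minimal_elems {1..n} R) = k}"

text \<open>Bivariate series: outer variable z, coefficients are power series in y.\<close>
definition G :: "real fps fps" where
  "G = Abs_fps (\<lambda>n. Abs_fps (\<lambda>k. real (cnt n k)))"

abbreviation zv :: "real fps fps" where "zv \<equiv> fps_X"
abbreviation yv :: "real fps fps" where "yv \<equiv> fps_const fps_X"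

text \<open>Substitution F(z,y) \<mapsto> F(a(z,y), c*y) for a with zero constant term:
  first y \<mapsto> c y in each coefficient, then z \<mapsto> a.\<close>
definition subst2 :: "real fps fps \<Rightarrow> real fps fps \<Rightarrow> real \<Rightarrow> real fps fps" where
  "subst2 F a c = fps_compose (Abs_fps (\<lambda>n. fps_compose (fps_nth F n) (fps_const c * fps_X))) a"

end

theory Submission
  imports Defs
begin

text \<open>Let \<open>P\<^sub>n\<close> be the 3-free naturally labelled posets on \<open>[n]\<close>, isolated elements allowed.
  Since \<open>n+1\<close> is maximal, a poset in \<open>P\<^sub>n\<^sub>+\<^sub>1\<close> is the same thing as a poset in \<open>P\<^sub>n\<close>
  together with the set of elements below \<open>n+1\<close>, which must be a set of minimal elements.
  Counting by minimal and isolated elements this gives a recurrence; as isolated elements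
  can be placed freely, the counts with isolated elements reduce to \<open>cnt\<close>, and one gets
  \<open>cnt (m+1) l + cnt m l = \<Sum>\<^sub>i C(m,i) cnt (m-i) (l-i) 2\<^sup>l\<^sup>-\<^sup>i\<close>.
  In terms of \<open>G\<close> this says \<open>(1 + z) G(z,y) = 1 + z G(z/(1-zy), 2y)/(1-zy)\<close>, which is the first
  identity after rearranging. The substitution \<open>\<sigma>: F(z,y) \<mapsto> F(z/(1-zy), 2y)\<close> is a ring
  homomorphism that multiplies the \<open>k\<close>-th summand of the second formula by \<open>2\<^sup>k\<close> and
  \<open>1/(1+zy)\<close> by \<open>1-zy\<close>; so the partial sums of the second formula satisfy the functional
  equation up to \<open>O(z\<^sup>N\<^sup>+\<^sup>1)\<close>, and the equation determines its solution coefficient by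
  coefficient.\<close>

unbundle fps_syntax

section \<open>Adjoining a maximal element\<close>

definition tf_posets :: "nat \<Rightarrow> (nat \<times> nat) set set" where
  "tf_posets n = {R. R \<subseteq> {1..n} \<times> {1..n} \<and> partial_order_on {1..n} R \<and> nat_labelled R \<and> three_free R}"

abbreviation mins :: "nat \<Rightarrow> (nat \<times> nat) set \<Rightarrow> nat set" where
  "mins n R \<equiv> minimal_elems {1..n} R"

definition isolated_elems :: "nat \<Rightarrow> (nat \<times> nat) set \<Rightarrow> nat set" where
  "isolated_elems n R = {x. isolated {1..n} R x}"

definition adjoin :: "nat \<Rightarrow> (nat \<times> nat) set \<Rightarrow> nat set \<Rightarrow> (nat \<times> nat) set" where
  "adjoin n R S = R \<union> (\<lambda>x. (x, Suc n)) ` S \<union> {(Suc n, Suc n)}"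

definition drop_top :: "nat \<Rightarrow> (nat \<times> nat) set \<Rightarrow> (nat \<times> nat) set" where
  "drop_top n R = R \<inter> {1..n} \<times> {1..n}"

definition below_top :: "nat \<Rightarrow> (nat \<times> nat) set \<Rightarrow> nat set" where
  "below_top n R = {x. (x, Suc n) \<in> R \<and> x \<noteq> Suc n}"

text \<open>Antisymmetry follows from the labelling, and 3-freeness leaves only trivial
  instances of transitivity.\<close>
lemma tf_posets_iff:
  "R \<in> tf_posets n \<longleftrightarrow>
     R \<subseteq> {1..n} \<times> {1..n} \<and> (\<forall>x\<in>{1..n}. (x, x) \<in> R) \<and> nat_labelled R \<and> three_free R"
proof
  assume "R \<in> tf_posets n"
  then show "R \<subseteq> {1..n} \<times> {1..n} \<and> (\<forall>x\<in>{1..n}. (x, x) \<in> R) \<and> nat_labelled R \<and> three_free R"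
    by (auto simp: tf_posets_def partial_order_on_def preorder_on_def refl_on_def)
next
  assume H: "R \<subseteq> {1..n} \<times> {1..n} \<and> (\<forall>x\<in>{1..n}. (x, x) \<in> R) \<and> nat_labelled R \<and> three_free R"
  have "trans R"
    using H unfolding trans_def three_free_def by metis
  moreover have "antisym R"
    using H unfolding antisym_def nat_labelled_def by (metis less_asym)
  ultimately show "R \<in> tf_posets n"
    using H by (simp add: tf_posets_def partial_order_on_def preorder_on_def refl_on_def)
qed

lemma finite_tf_posets: "finite (tf_posets n)"
proof (rule finite_subset)
  show "tf_posets n \<subseteq> Pow ({1..n} \<times> {1..n})"
    using tf_posets_iff by blast
qed simp

lemma mins_subset: "mins n R \<subseteq> {1..n}"
  by (auto simp: minimal_elems_def)

lemma finite_mins: "finite (mins n R)"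
  using mins_subset finite_subset by blast

lemma isolated_elems_subset_mins: "R \<in> tf_posets n \<Longrightarrow> isolated_elems n R \<subseteq> mins n R"
  by (auto simp: isolated_elems_def minimal_elems_def isolated_def tf_posets_iff)

lemma finite_isolated_elems: "R \<in> tf_posets n \<Longrightarrow> finite (isolated_elems n R)"
  using isolated_elems_subset_mins finite_mins finite_subset by blast

lemma card_isolated_elems_le: "R \<in> tf_posets n \<Longrightarrow> card (isolated_elems n R) \<le> card (mins n R)"
  by (rule card_mono[OF finite_mins isolated_elems_subset_mins])

lemma adjoin_in_tf_posets:
  assumes R: "R \<in> tf_posets n" and S: "S \<subseteq> mins n R"
  shows "adjoin n R S \<in> tf_posets (Suc n)"
proof -
  have S1: "S \<subseteq> {1..n}" using S mins_subset by blast
  have S_min: "\<And>x y. x \<in> S \<Longrightarrow> (y, x) \<in> R \<Longrightarrow> y = x"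
    using S R by (auto simp: minimal_elems_def tf_posets_iff)
  have R1: "R \<subseteq> {1..n} \<times> {1..n}" and tf: "three_free R"
    using R by (simp_all add: tf_posets_iff)
  have "three_free (adjoin n R S)"
    unfolding three_free_def
  proof clarify
    fix x y z assume xy: "(x, y) \<in> adjoin n R S" "x \<noteq> y" and yz: "(y, z) \<in> adjoin n R S" "y \<noteq> z"
    have "y \<le> n"
      using yz R1 S1 by (auto simp: adjoin_def)
    then have "(x, y) \<in> R"
      using xy by (auto simp: adjoin_def)
    show False
    proof (cases "(y, z) \<in> R")
      case True
      then show False using \<open>(x, y) \<in> R\<close> xy(2) yz(2) tf unfolding three_free_def by blast
    next
      case False
      then have "y \<in> S" using yz by (auto simp: adjoin_def)
      then show False using S_min \<open>(x, y) \<in> R\<close> xy(2) by blast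
    qed
  qed
  then show ?thesis
    using R S1 R1 by (auto simp: tf_posets_iff adjoin_def nat_labelled_def le_Suc_eq)
qed

lemma drop_top_in_tf_posets:
  assumes "R \<in> tf_posets (Suc n)"
  shows "drop_top n R \<in> tf_posets n"
proof -
  have "three_free (drop_top n R)"
    using assms unfolding tf_posets_iff three_free_def drop_top_def by blast
  then show ?thesis
    using assms unfolding tf_posets_iff nat_labelled_def drop_top_def by auto
qed

lemma below_top_subset_mins:
  assumes R: "R \<in> tf_posets (Suc n)"
  shows "below_top n R \<subseteq> mins n (drop_top n R)"
proof
  fix x assume "x \<in> below_top n R"
  then have x: "(x, Suc n) \<in> R" "x \<noteq> Suc n" by (auto simp: below_top_def)
  then have "x \<in> {1..n}" using R by (auto simp: tf_posets_iff)
  moreover have "y = x" if "(y, x) \<in> R" for y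
    using that x R unfolding tf_posets_iff three_free_def by blast
  ultimately show "x \<in> mins n (drop_top n R)"
    by (auto simp: minimal_elems_def drop_top_def)
qed

lemma adjoin_drop_top:
  assumes R: "R \<in> tf_posets (Suc n)"
  shows "adjoin n (drop_top n R) (below_top n R) = R"
proof -
  have R1: "R \<subseteq> {1..Suc n} \<times> {1..Suc n}" "(Suc n, Suc n) \<in> R" and lab: "nat_labelled R"
    using R by (auto simp: tf_posets_iff)
  have "(a, b) \<in> adjoin n (drop_top n R) (below_top n R)" if ab: "(a, b) \<in> R" for a b
  proof -
    have "a \<le> Suc n" "b \<le> Suc n" "1 \<le> a" "1 \<le> b" using ab R1 by auto
    moreover have "a = Suc n \<Longrightarrow> b = Suc n"
      using lab ab \<open>b \<le> Suc n\<close> by (force simp: nat_labelled_def)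
    ultimately show ?thesis
      using ab by (auto simp: adjoin_def drop_top_def below_top_def le_Suc_eq)
  qed
  moreover have "adjoin n (drop_top n R) (below_top n R) \<subseteq> R"
    using R1 by (auto simp: adjoin_def drop_top_def below_top_def)
  ultimately show ?thesis by auto
qed

lemma
  assumes "R \<in> tf_posets n" and "S \<subseteq> mins n R"
  shows drop_top_adjoin: "drop_top n (adjoin n R S) = R"
    and below_top_adjoin: "below_top n (adjoin n R S) = S"
  using assms mins_subset[of n R] by (auto simp: tf_posets_iff drop_top_def adjoin_def below_top_def)

lemma mins_adjoin:
  assumes R: "R \<in> tf_posets n" and S: "S \<subseteq> mins n R"
  shows "mins (Suc n) (adjoin n R S) = (if S = {} then insert (Suc n) (mins n R) else mins n R)"
proof -
  have S1: "S \<subseteq> {1..n}" using S mins_subset by blast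
  have R1: "R \<subseteq> {1..n} \<times> {1..n}" using R by (simp add: tf_posets_iff)
  have top: "Suc n \<in> mins (Suc n) (adjoin n R S) \<longleftrightarrow> S = {}"
  proof
    assume top: "Suc n \<in> mins (Suc n) (adjoin n R S)"
    have "s = Suc n" if "s \<in> S" for s
      using top that S1 unfolding minimal_elems_def adjoin_def by auto
    then show "S = {}" using S1 by fastforce
  qed (use R1 in \<open>auto simp: minimal_elems_def adjoin_def\<close>)
  have other: "x \<in> mins (Suc n) (adjoin n R S) \<longleftrightarrow> x \<in> mins n R" if "x \<noteq> Suc n" for x
    using that R1 by (auto simp: minimal_elems_def adjoin_def)
  have "Suc n \<notin> mins n R"
    using mins_subset[of n R] by auto
  show ?thesis
  proof (rule set_eqI)
    fix x
    show "x \<in> mins (Suc n) (adjoin n R S) \<longleftrightarrow> x \<in> (if S = {} then insert (Suc n) (mins n R) else mins n R)"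
      using top other[of x] \<open>Suc n \<notin> mins n R\<close> by (cases "x = Suc n") auto
  qed
qed

lemma isolated_elems_adjoin:
  assumes R: "R \<in> tf_posets n" and S: "S \<subseteq> mins n R"
  shows "isolated_elems (Suc n) (adjoin n R S) =
    (if S = {} then insert (Suc n) (isolated_elems n R) else isolated_elems n R - S)"
proof -
  have S1: "S \<subseteq> {1..n}" using S mins_subset by blast
  have R1: "R \<subseteq> {1..n} \<times> {1..n}" using R by (simp add: tf_posets_iff)
  have top: "Suc n \<in> isolated_elems (Suc n) (adjoin n R S) \<longleftrightarrow> S = {}"
  proof
    assume top: "Suc n \<in> isolated_elems (Suc n) (adjoin n R S)"
    have "s = Suc n" if "s \<in> S" for s
    proof -
      have "s \<in> {1..Suc n}" "(s, Suc n) \<in> adjoin n R S"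
        using that S1 by (auto simp: adjoin_def)
      then show ?thesis using top by (auto simp: isolated_elems_def isolated_def)
    qed
    then show "S = {}" using S1 by fastforce
  qed (use R1 in \<open>auto simp: isolated_elems_def isolated_def adjoin_def\<close>)
  have other: "x \<in> isolated_elems (Suc n) (adjoin n R S) \<longleftrightarrow> x \<in> isolated_elems n R - S"
    if "x \<noteq> Suc n" for x
    using that R1 S1 by (auto simp: isolated_elems_def isolated_def adjoin_def)
  have "Suc n \<notin> isolated_elems n R"
    by (auto simp: isolated_elems_def isolated_def)
  show ?thesis
  proof (rule set_eqI)
    fix x
    show "x \<in> isolated_elems (Suc n) (adjoin n R S) \<longleftrightarrow>
        x \<in> (if S = {} then insert (Suc n) (isolated_elems n R) else isolated_elems n R - S)"
      using top other[of x] \<open>Suc n \<notin> isolated_elems n R\<close> by (cases "x = Suc n") auto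
  qed
qed

definition adjoin_data :: "nat \<Rightarrow> ((nat \<times> nat) set \<times> nat set) set" where
  "adjoin_data n = (SIGMA R:tf_posets n. Pow (mins n R))"

lemma finite_adjoin_data: "finite (adjoin_data n)"
  unfolding adjoin_data_def using finite_tf_posets finite_mins by (intro finite_SigmaI) auto

lemma bij_betw_adjoin: "bij_betw (\<lambda>(R, S). adjoin n R S) (adjoin_data n) (tf_posets (Suc n))"
proof (rule bij_betw_byWitness[where f' = "\<lambda>R. (drop_top n R, below_top n R)"])
  show "\<forall>p\<in>adjoin_data n. (\<lambda>R. (drop_top n R, below_top n R)) ((\<lambda>(R, S). adjoin n R S) p) = p"
    by (auto simp: adjoin_data_def drop_top_adjoin below_top_adjoin)
  show "\<forall>R\<in>tf_posets (Suc n). (\<lambda>(R, S). adjoin n R S) (drop_top n R, below_top n R) = R"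
    by (simp add: adjoin_drop_top)
  show "(\<lambda>(R, S). adjoin n R S) ` adjoin_data n \<subseteq> tf_posets (Suc n)"
    by (auto simp: adjoin_data_def adjoin_in_tf_posets)
  show "(\<lambda>R. (drop_top n R, below_top n R)) ` tf_posets (Suc n) \<subseteq> adjoin_data n"
    unfolding adjoin_data_def using drop_top_in_tf_posets below_top_subset_mins by blast
qed

lemma card_tf_posets_Suc:
  "card {R \<in> tf_posets (Suc n). Q R} = card {(R, S) \<in> adjoin_data n. Q (adjoin n R S)}"
proof -
  let ?f = "\<lambda>(R, S). adjoin n R S"
  have image_filter: "\<And>f A. f ` {x \<in> A. Q (f x)} = {y \<in> f ` A. Q y}"
    by blast
  have "{(R, S) \<in> adjoin_data n. Q (adjoin n R S)} = {p \<in> adjoin_data n. Q (?f p)}"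
    by (intro Collect_cong) (auto split: prod.split)
  moreover have "bij_betw ?f {p \<in> adjoin_data n. Q (?f p)} {R \<in> tf_posets (Suc n). Q R}"
    using bij_betw_adjoin
    by (rule bij_betw_subset) (simp_all only: image_filter bij_betw_imp_surj_on[OF bij_betw_adjoin], auto)
  ultimately show ?thesis
    by (simp add: bij_betw_same_card)
qed

lemma card_adjoin_data_empty:
  "card {(R, S) \<in> adjoin_data n. S = {} \<and> P R} = card {R \<in> tf_posets n. P R}"
proof -
  have "{(R, S) \<in> adjoin_data n. S = {} \<and> P R} = (\<lambda>R. (R, {})) ` {R \<in> tf_posets n. P R}"
    by (auto simp: adjoin_data_def)
  then show ?thesis
    by (simp add: card_image inj_on_def)
qed

lemma card_filter_split:
  "finite A \<Longrightarrow> card {x \<in> A. P x} = card {x \<in> A. P x \<and> Q x} + card {x \<in> A. P x \<and> \<not> Q x}"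
  by (subst card_Un_disjoint[symmetric]) (auto intro: arg_cong[where f = card])

lemma card_subsets_diff_eq:
  assumes M: "finite M" and IM: "I \<subseteq> M"
  shows "card {S. S \<subseteq> M \<and> card (I - S) = j} = (card I choose j) * 2 ^ (card M - card I)"
proof -
  let ?f = "\<lambda>(A, B). (I - A) \<union> B"
  let ?D = "{A. A \<subseteq> I \<and> card A = j} \<times> Pow (M - I)"
  have I: "finite I" using M IM finite_subset by blast
  have "bij_betw ?f ?D {S. S \<subseteq> M \<and> card (I - S) = j}"
  proof (rule bij_betw_byWitness[where f' = "\<lambda>S. (I - S, S - I)"])
    show "\<forall>p\<in>?D. (\<lambda>S. (I - S, S - I)) (?f p) = p"
      by auto
    show "\<forall>S\<in>{S. S \<subseteq> M \<and> card (I - S) = j}. ?f (I - S, S - I) = S"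
      by auto
    have "I - ((I - A) \<union> B) = A" if "A \<subseteq> I" "B \<subseteq> M - I" for A B
      using that by auto
    then show "?f ` ?D \<subseteq> {S. S \<subseteq> M \<and> card (I - S) = j}"
      using IM by auto
    show "(\<lambda>S. (I - S, S - I)) ` {S. S \<subseteq> M \<and> card (I - S) = j} \<subseteq> ?D"
      by auto
  qed
  then have "card {S. S \<subseteq> M \<and> card (I - S) = j} = card ?D"
    by (simp add: bij_betw_same_card)
  also have "\<dots> = (card I choose j) * 2 ^ (card M - card I)"
    using M I IM by (simp add: card_cartesian_product n_subsets card_Pow card_Diff_subset)
  finally show ?thesis .
qed

section \<open>Counting by minimal and isolated elements\<close>

definition count_posets :: "nat \<Rightarrow> nat \<Rightarrow> nat \<Rightarrow> nat" where
  "count_posets n k j =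
     card {R \<in> tf_posets n. card (mins n R) = k \<and> card (isolated_elems n R) = j}"

lemma count_posets_Suc:
  "count_posets (Suc n) k j = card {(R, S) \<in> adjoin_data n.
     if S = {} then card (mins n R) + 1 = k \<and> card (isolated_elems n R) + 1 = j
     else card (mins n R) = k \<and> card (isolated_elems n R - S) = j}"
  unfolding count_posets_def card_tf_posets_Suc
proof (rule arg_cong[where f = card], rule Collect_cong, clarify)
  fix R S
  show "((R, S) \<in> adjoin_data n \<and> card (mins (Suc n) (adjoin n R S)) = k
          \<and> card (isolated_elems (Suc n) (adjoin n R S)) = j) \<longleftrightarrow>
        ((R, S) \<in> adjoin_data n \<and> (if S = {} then card (mins n R) + 1 = k \<and> card (isolated_elems n R) + 1 = j
          else card (mins n R) = k \<and> card (isolated_elems n R - S) = j))"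
  proof (cases "(R, S) \<in> adjoin_data n")
    case True
    then have R: "R \<in> tf_posets n" "S \<subseteq> mins n R" by (auto simp: adjoin_data_def)
    have "Suc n \<notin> mins n R" "Suc n \<notin> isolated_elems n R"
      using mins_subset[of n R] isolated_elems_subset_mins[OF R(1)] by auto
    then show ?thesis
      using True mins_adjoin[OF R] isolated_elems_adjoin[OF R] finite_mins[of n R]
        finite_isolated_elems[OF R(1)] by simp
  qed simp
qed

lemma card_adjoin_data_isolated:
  "card {(R, S) \<in> adjoin_data n. card (mins n R) = k \<and> card (isolated_elems n R - S) = j}
     = (\<Sum>j'\<le>k. count_posets n k j' * ((j' choose j) * 2 ^ (k - j')))"
proof -
  let ?A = "{R \<in> tf_posets n. card (mins n R) = k}"
  let ?w = "\<lambda>i. (i choose j) * 2 ^ (k - i)"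
  have "{(R, S) \<in> adjoin_data n. card (mins n R) = k \<and> card (isolated_elems n R - S) = j}
      = Sigma ?A (\<lambda>R. {S. S \<subseteq> mins n R \<and> card (isolated_elems n R - S) = j})"
    by (auto simp: adjoin_data_def)
  then have "card {(R, S) \<in> adjoin_data n. card (mins n R) = k \<and> card (isolated_elems n R - S) = j}
      = (\<Sum>R\<in>?A. card {S. S \<subseteq> mins n R \<and> card (isolated_elems n R - S) = j})"
    using finite_tf_posets finite_mins by (simp add: card_SigmaI)
  also have "\<dots> = (\<Sum>R\<in>?A. ?w (card (isolated_elems n R)))"
  proof (rule sum.cong[OF refl])
    fix R assume "R \<in> ?A"
    then show "card {S. S \<subseteq> mins n R \<and> card (isolated_elems n R - S) = j} = ?w (card (isolated_elems n R))"
      using card_subsets_diff_eq[OF finite_mins isolated_elems_subset_mins[of R n]] by simp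
  qed
  also have "\<dots> = (\<Sum>j'\<le>k. \<Sum>R\<in>{R \<in> ?A. card (isolated_elems n R) = j'}. ?w (card (isolated_elems n R)))"
    by (rule sum.group[symmetric]) (use finite_tf_posets card_isolated_elems_le in auto)
  also have "\<dots> = (\<Sum>j'\<le>k. count_posets n k j' * ?w j')"
    by (rule sum.cong[OF refl]) (simp add: count_posets_def conj_assoc)
  finally show ?thesis .
qed

lemma card_tf_posets_Suc_mins_isolated:
  "card {R \<in> tf_posets n. card (mins n R) + 1 = k \<and> card (isolated_elems n R) + 1 = j}
     = (if 1 \<le> k \<and> 1 \<le> j then count_posets n (k - 1) (j - 1) else 0)"
proof (cases "1 \<le> k \<and> 1 \<le> j")
  case True
  then have "{R \<in> tf_posets n. card (mins n R) + 1 = k \<and> card (isolated_elems n R) + 1 = j}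
      = {R \<in> tf_posets n. card (mins n R) = k - 1 \<and> card (isolated_elems n R) = j - 1}"
    by auto
  then show ?thesis using True by (simp add: count_posets_def)
qed auto

lemma count_posets_rec:
  "count_posets (Suc n) k j + count_posets n k j =
     (if 1 \<le> k \<and> 1 \<le> j then count_posets n (k - 1) (j - 1) else 0)
     + (\<Sum>j'\<le>k. count_posets n k j' * ((j' choose j) * 2 ^ (k - j')))"
proof -
  let ?P = "\<lambda>(R, S). card (mins n R) = k \<and> card (isolated_elems n R - S) = j"
  let ?Q = "\<lambda>(R, S::nat set). if S = {} then card (mins n R) + 1 = k \<and> card (isolated_elems n R) + 1 = j
     else card (mins n R) = k \<and> card (isolated_elems n R - S) = j"
  have "count_posets (Suc n) k j = card {p \<in> adjoin_data n. ?Q p}"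
    unfolding count_posets_Suc by (intro arg_cong[where f = card]) auto
  also have "\<dots> =
      card {p \<in> adjoin_data n. ?Q p \<and> snd p = {}} + card {p \<in> adjoin_data n. ?Q p \<and> snd p \<noteq> {}}"
    by (rule card_filter_split[OF finite_adjoin_data])
  also have "{p \<in> adjoin_data n. ?Q p \<and> snd p = {}} = {(R, S) \<in> adjoin_data n. S = {} \<and>
      card (mins n R) + 1 = k \<and> card (isolated_elems n R) + 1 = j}"
    by auto
  also have "{p \<in> adjoin_data n. ?Q p \<and> snd p \<noteq> {}} = {p \<in> adjoin_data n. ?P p \<and> snd p \<noteq> {}}"
    by auto
  finally have Suc_n: "count_posets (Suc n) k j =
      (if 1 \<le> k \<and> 1 \<le> j then count_posets n (k - 1) (j - 1) else 0)
      + card {p \<in> adjoin_data n. ?P p \<and> snd p \<noteq> {}}"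
    by (simp only: card_adjoin_data_empty card_tf_posets_Suc_mins_isolated)
  have "{p \<in> adjoin_data n. ?P p \<and> snd p = {}} = {(R, S) \<in> adjoin_data n. S = {} \<and>
      card (mins n R) = k \<and> card (isolated_elems n R) = j}"
    by auto
  then have n: "count_posets n k j = card {p \<in> adjoin_data n. ?P p \<and> snd p = {}}"
    by (simp only: card_adjoin_data_empty count_posets_def)
  have "card {p \<in> adjoin_data n. ?P p} = card {p \<in> adjoin_data n. ?P p \<and> snd p = {}}
      + card {p \<in> adjoin_data n. ?P p \<and> snd p \<noteq> {}}"
    by (rule card_filter_split[OF finite_adjoin_data])
  moreover have "card {p \<in> adjoin_data n. ?P p} =
      (\<Sum>j'\<le>k. count_posets n k j' * ((j' choose j) * 2 ^ (k - j')))"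
    unfolding card_adjoin_data_isolated[symmetric] by (intro arg_cong[where f = card]) auto
  ultimately show ?thesis
    using Suc_n n by simp
qed

lemma count_posets_eq_0_if_less:
  assumes "k < j"
  shows "count_posets n k j = 0"
proof -
  have "{R \<in> tf_posets n. card (mins n R) = k \<and> card (isolated_elems n R) = j} = {}"
    using card_isolated_elems_le assms by fastforce
  then show ?thesis
    unfolding count_posets_def by (metis card.empty)
qed

lemma count_posets_0: "count_posets 0 k j = (if k = 0 \<and> j = 0 then 1 else 0)"
proof -
  have "tf_posets 0 = {{}}"
    by (auto simp: tf_posets_iff nat_labelled_def three_free_def)
  moreover have "mins 0 {} = {}" "isolated_elems 0 {} = {}"
    by (auto simp: minimal_elems_def isolated_elems_def isolated_def)
  ultimately show ?thesis
    by (simp add: count_posets_def Collect_conv_if)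
qed

lemma cnt_eq_count_posets: "cnt n k = count_posets n k 0"
proof -
  have "card (isolated_elems n R) = 0 \<longleftrightarrow> (\<forall>x\<in>{1..n}. \<not> isolated {1..n} R x)"
    if "R \<in> tf_posets n" for R
    using finite_isolated_elems[OF that] by (auto simp: isolated_elems_def isolated_def)
  then show ?thesis
    unfolding cnt_def count_posets_def
    by (intro arg_cong[where f = card]) (auto simp: tf_posets_def)
qed

lemma sum_choose_mult_choose:
  fixes g :: "nat \<Rightarrow> nat"
  assumes "j \<le> n" "j \<le> k"
  shows "(\<Sum>j'\<le>k. (n choose j') * g j' * (j' choose j)) =
         (n choose j) * (\<Sum>i\<le>k - j. ((n - j) choose i) * g (j + i))"
proof -
  have "(\<Sum>j'\<le>k. (n choose j') * g j' * (j' choose j)) =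
      (\<Sum>j'\<in>{j..k}. (n choose j') * g j' * (j' choose j))"
    by (rule sum.mono_neutral_right) auto
  also have "{j..k} = (\<lambda>i. j + i) ` {..k - j}"
  proof -
    have "x \<in> (\<lambda>i. j + i) ` {..k - j}" if "x \<in> {j..k}" for x
      using that by (intro image_eqI[of _ _ "x - j"]) auto
    then show ?thesis using assms(2) by auto
  qed
  also have "(\<Sum>j'\<in>(\<lambda>i. j + i) ` {..k - j}. (n choose j') * g j' * (j' choose j))
      = (\<Sum>i\<le>k - j. (n choose (j + i)) * ((j + i) choose j) * g (j + i))"
    by (subst sum.reindex) (auto simp: inj_on_def mult_ac)
  also have "\<dots> = (\<Sum>i\<le>k - j. (n choose j) * ((n - j) choose i) * g (j + i))"
  proof (rule sum.cong[OF refl])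
    fix i
    show "(n choose (j + i)) * ((j + i) choose j) * g (j + i) = (n choose j) * ((n - j) choose i) * g (j + i)"
      using choose_mult[of j "j + i" n] assms(1) by (cases "j + i \<le> n") (simp_all add: binomial_eq_0)
  qed
  finally show ?thesis
    by (simp add: sum_distrib_left mult_ac)
qed

lemma cnt_rec_if_count_posets_eq:
  assumes "\<And>k j. count_posets m k j = (if j \<le> k then (m choose j) * cnt (m - j) (k - j) else 0)"
  shows "cnt (Suc m) l + cnt m l = (\<Sum>i\<le>l. (m choose i) * cnt (m - i) (l - i) * 2 ^ (l - i))"
proof -
  have "cnt (Suc m) l + cnt m l = (\<Sum>j'\<le>l. count_posets m l j' * 2 ^ (l - j'))"
    using count_posets_rec[of m l 0] by (simp add: cnt_eq_count_posets)
  also have "\<dots> = (\<Sum>i\<le>l. (m choose i) * cnt (m - i) (l - i) * 2 ^ (l - i))"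
    using assms by (intro sum.cong) auto
  finally show ?thesis .
qed

lemma sum_count_posets_choose:
  assumes count: "\<And>k j. count_posets n k j = (if j \<le> k then (n choose j) * cnt (n - j) (k - j) else 0)"
    and rec: "cnt (Suc (n - j)) (k - j) + cnt (n - j) (k - j) =
      (\<Sum>i\<le>k - j. ((n - j) choose i) * cnt (n - j - i) (k - j - i) * 2 ^ (k - j - i))"
    and "j \<le> n" "j \<le> k"
  shows "(\<Sum>j'\<le>k. count_posets n k j' * ((j' choose j) * 2 ^ (k - j')))
    = (n choose j) * (cnt (Suc (n - j)) (k - j) + cnt (n - j) (k - j))"
proof -
  have "(\<Sum>j'\<le>k. count_posets n k j' * ((j' choose j) * 2 ^ (k - j')))
      = (\<Sum>j'\<le>k. (n choose j') * (cnt (n - j') (k - j') * 2 ^ (k - j')) * (j' choose j))"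
    by (rule sum.cong[OF refl]) (simp add: count mult_ac)
  also have "\<dots> = (n choose j) * (\<Sum>i\<le>k - j. ((n - j) choose i) *
      (cnt (n - (j + i)) (k - (j + i)) * 2 ^ (k - (j + i))))"
    by (rule sum_choose_mult_choose[OF assms(3,4)])
  also have "\<dots> = (n choose j) * (cnt (Suc (n - j)) (k - j) + cnt (n - j) (k - j))"
    by (simp add: rec diff_diff_eq mult_ac)
  finally show ?thesis .
qed

lemma count_posets_eq_Suc:
  assumes count: "\<And>k j. count_posets n k j = (if j \<le> k then (n choose j) * cnt (n - j) (k - j) else 0)"
    and rec: "\<And>m l. m \<le> n \<Longrightarrow>
      cnt (Suc m) l + cnt m l = (\<Sum>i\<le>l. (m choose i) * cnt (m - i) (l - i) * 2 ^ (l - i))"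
  shows "count_posets (Suc n) k j = (if j \<le> k then (Suc n choose j) * cnt (Suc n - j) (k - j) else 0)"
proof -
  consider "k < j" | "j = 0" | "0 < j" "j \<le> k" "j \<le> n" | "0 < j" "j \<le> k" "n < j"
    by linarith
  then show ?thesis
  proof cases
    case 1
    then show ?thesis by (simp add: count_posets_eq_0_if_less)
  next
    case 2
    then show ?thesis by (simp add: cnt_eq_count_posets)
  next
    case 3
    have "count_posets n (k - 1) (j - 1) = (n choose (j - 1)) * cnt (Suc (n - j)) (k - j)"
      using 3 by (simp add: count Suc_diff_le)
    moreover have "Suc n choose j = (n choose (j - 1)) + (n choose j)"
      using 3 by (cases j) simp_all
    ultimately show ?thesis
      using 3 count_posets_rec[of n k j] sum_count_posets_choose[OF count rec] count[of k j]
      by (simp add: Suc_diff_le algebra_simps)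
  next
    case 4
    have "(\<Sum>j'\<le>k. count_posets n k j' * ((j' choose j) * 2 ^ (k - j'))) = 0"
      using 4 by (intro sum.neutral) (auto simp: count binomial_eq_0)
    moreover have "count_posets n (k - 1) (j - 1) = (if j = Suc n then cnt 0 (k - j) else 0)"
      using 4 by (auto simp: count binomial_eq_0)
    ultimately show ?thesis
      using 4 count_posets_rec[of n k j] count[of k j] by (auto simp: binomial_eq_0)
  qed
qed

text \<open>Isolated elements can be chosen freely among the minimal ones.\<close>
lemma count_posets_eq:
  "count_posets n k j = (if j \<le> k then (n choose j) * cnt (n - j) (k - j) else 0)"
proof (induction n arbitrary: k j rule: less_induct)
  case (less n)
  show ?case
  proof (cases n)
    case 0
    then show ?thesis by (simp add: count_posets_0 cnt_eq_count_posets)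
  next
    case (Suc n')
    have "cnt (Suc m) l + cnt m l = (\<Sum>i\<le>l. (m choose i) * cnt (m - i) (l - i) * 2 ^ (l - i))"
      if "m \<le> n'" for m l
      by (rule cnt_rec_if_count_posets_eq) (use less.IH Suc that in simp)
    with less.IH show ?thesis
      unfolding Suc by (intro count_posets_eq_Suc) simp_all
  qed
qed

theorem cnt_rec:
  "cnt (Suc m) l + cnt m l = (\<Sum>i\<le>l. (m choose i) * cnt (m - i) (l - i) * 2 ^ (l - i))"
  by (rule cnt_rec_if_count_posets_eq[OF count_posets_eq])

lemma cnt_0: "cnt 0 k = (if k = 0 then 1 else 0)"
  by (simp add: cnt_eq_count_posets count_posets_0)

section \<open>The functional equation\<close>

lemma fps_mult_inverse_eq_one:
  fixes f :: "'a::field fps fps"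
  assumes "f $ 0 = 1"
  shows "f * inverse f = 1"
proof -
  have "inverse (f $ 0) = 1"
    using assms by (simp add: fps_inverse_one')
  then show ?thesis
    using fps_right_inverse[of f 1] assms by (simp add: fps_inverse_def)
qed

lemma fps_inverse_unique':
  fixes f g :: "'a::field fps fps"
  assumes "f $ 0 = 1" "f * g = 1"
  shows "inverse f = g"
proof -
  have "inverse f = inverse f * (f * g)" using assms by simp
  also have "\<dots> = (f * inverse f) * g" by (simp add: mult_ac)
  finally show ?thesis using fps_mult_inverse_eq_one[OF assms(1)] by simp
qed

definition geom :: "real fps fps" where
  "geom = inverse (1 - zv * yv)"

definition zsub :: "real fps fps" where
  "zsub = zv * geom"

definition ydil :: "real fps \<Rightarrow> real fps" where
  "ydil p = p oo (fps_const 2 * fps_X)"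

definition sigma :: "real fps fps \<Rightarrow> real fps fps" where
  "sigma F = subst2 F zsub 2"

lemma geom_mult: "geom * (1 - zv * yv) = 1"
  unfolding geom_def using fps_mult_inverse_eq_one[of "1 - zv * yv"] by (simp add: mult.commute)

lemma geom_nth: "geom $ k = fps_X ^ k"
proof -
  define A :: "real fps fps" where "A = Abs_fps (\<lambda>j. fps_X ^ j)"
  have "(1 - zv * yv) * A = 1"
  proof (rule fps_ext)
    fix n
    have "(1 - zv * yv) * A = A - zv * (yv * A)" by (simp add: algebra_simps)
    then show "((1 - zv * yv) * A) $ n = 1 $ n"
      by (cases n) (simp_all add: A_def fps_mult_left_const_nth)
  qed
  then have geom_eq: "geom = A"
    unfolding geom_def by (intro fps_inverse_unique') simp_all
  show ?thesis
    unfolding geom_eq A_def by (rule fps_nth_Abs_fps)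
qed

lemma geom_power_nth: "(geom ^ Suc m) $ j = of_nat ((m + j) choose m) * fps_X ^ j"
proof (induction m arbitrary: j)
  case 0
  then show ?case by (simp add: geom_nth)
next
  case (Suc m)
  have "(geom ^ Suc (Suc m)) $ j = (geom ^ Suc m * geom) $ j"
    by (simp add: mult.commute)
  also have "\<dots> = (\<Sum>i=0..j. of_nat ((m + i) choose m) * fps_X ^ i * fps_X ^ (j - i))"
    by (simp add: fps_mult_nth Suc.IH geom_nth del: power_Suc)
  also have "\<dots> = of_nat (\<Sum>i\<le>j. (m + i) choose m) * fps_X ^ j"
    by (simp add: mult.assoc power_add[symmetric] sum_distrib_right atLeast0AtMost)
  also have "\<dots> = of_nat ((Suc m + j) choose Suc m) * fps_X ^ j"
    by (simp add: choose_rising_sum(1))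
  finally show ?case .
qed

lemma zsub_nth_0: "zsub $ 0 = 0"
  by (simp add: zsub_def)

lemma zsub_power_mult_geom_nth:
  "(zsub ^ m * geom) $ n = (if m \<le> n then of_nat (n choose m) * fps_X ^ (n - m) else 0)"
proof -
  have e: "zsub ^ m * geom = zv ^ m * geom ^ Suc m"
    by (simp add: zsub_def power_mult_distrib mult.assoc)
  show ?thesis
    unfolding e fps_X_power_mult_nth geom_power_nth by auto
qed

lemma sigma_mult_geom_nth:
  "(sigma F * geom) $ n = (\<Sum>m=0..n. ydil (F $ m) * (of_nat (n choose m) * fps_X ^ (n - m)))"
proof -
  define M where "M = Abs_fps (\<lambda>m. ydil (F $ m))"
  have "sigma F = M oo zsub"
    by (simp add: sigma_def subst2_def M_def ydil_def)
  then have "(sigma F * geom) $ n = (\<Sum>i=0..n. (\<Sum>m=0..i. M $ m * (zsub ^ m) $ i) * geom $ (n - i))"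
    by (simp add: fps_mult_nth fps_compose_nth)
  also have "\<dots> = (\<Sum>i=0..n. \<Sum>m=0..n. M $ m * (zsub ^ m) $ i * geom $ (n - i))"
  proof (rule sum.cong[OF refl])
    fix i assume "i \<in> {0..n}"
    then have "(\<Sum>m=0..i. M $ m * (zsub ^ m) $ i) = (\<Sum>m=0..n. M $ m * (zsub ^ m) $ i)"
      by (intro sum.mono_neutral_left) (auto simp: zsub_def power_mult_distrib fps_X_power_mult_nth)
    then show "(\<Sum>m=0..i. M $ m * (zsub ^ m) $ i) * geom $ (n - i) =
        (\<Sum>m=0..n. M $ m * (zsub ^ m) $ i * geom $ (n - i))"
      by (simp add: sum_distrib_right)
  qed
  also have "\<dots> = (\<Sum>m=0..n. M $ m * (zsub ^ m * geom) $ n)"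
    by (subst sum.swap) (simp add: fps_mult_nth sum_distrib_left mult.assoc)
  also have "\<dots> = (\<Sum>m=0..n. ydil (F $ m) * (of_nat (n choose m) * fps_X ^ (n - m)))"
    by (rule sum.cong[OF refl]) (simp add: zsub_power_mult_geom_nth M_def)
  finally show ?thesis .
qed

lemma ydil_mult_monom_nth:
  "(ydil p * (of_nat c * fps_X ^ d)) $ k = real c * (if k < d then 0 else 2 ^ (k - d) * p $ (k - d))"
proof -
  have e: "ydil p * (of_nat c * fps_X ^ d) = fps_const (real c) * (ydil p * fps_X ^ d)"
    by (simp add: fps_of_nat[symmetric] mult_ac)
  show ?thesis
    unfolding e fps_mult_left_const_nth fps_X_power_mult_right_nth by (simp add: ydil_def fps_compose_linear)
qed

lemma cnt_rec_reflected:
  "cnt (Suc m) k + cnt m k =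
    (\<Sum>i=0..m. (m choose i) * (if m - i \<le> k then 2 ^ (k - (m - i)) * cnt i (k - (m - i)) else 0))"
proof -
  define f where "f i = (m choose i) * cnt (m - i) (k - i) * 2 ^ (k - i)" for i
  have "cnt (Suc m) k + cnt m k = (\<Sum>i\<le>k. f i)"
    using cnt_rec by (simp add: f_def)
  also have "\<dots> = (\<Sum>i\<in>{i\<in>{0..m}. i \<le> k}. f i)"
    by (rule sum.mono_neutral_right) (auto simp: f_def binomial_eq_0)
  also have "\<dots> = (\<Sum>i=0..m. if i \<le> k then f i else 0)"
    by (rule sum.inter_filter) simp
  also have "\<dots> = (\<Sum>i=0..m. if m - i \<le> k then f (m - i) else 0)"
    by (rule sum.reindex_bij_witness[of _ "\<lambda>i. m - i" "\<lambda>i. m - i"]) auto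
  also have "\<dots> = (\<Sum>i=0..m. (m choose i) * (if m - i \<le> k then 2 ^ (k - (m - i)) * cnt i (k - (m - i)) else 0))"
    by (rule sum.cong[OF refl]) (auto simp: f_def binomial_symmetric[symmetric] mult_ac)
  finally show ?thesis .
qed

lemma G_nth: "G $ n = Abs_fps (\<lambda>k. real (cnt n k))"
  by (simp add: G_def)

lemma G_functional_equation: "(1 + zv) * G = 1 + zv * (sigma G * geom)"
proof (rule fps_ext)
  fix n
  show "((1 + zv) * G) $ n = (1 + zv * (sigma G * geom)) $ n"
  proof (cases n)
    case 0
    have "G $ 0 = 1" by (rule fps_ext) (simp add: G_nth cnt_0)
    then show ?thesis using 0 by (simp add: algebra_simps)
  next
    case (Suc m)
    have "G $ Suc m + G $ m = (\<Sum>i=0..m. ydil (G $ i) * (of_nat (m choose i) * fps_X ^ (m - i)))"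
    proof (rule fps_ext)
      fix k
      have "(G $ Suc m + G $ m) $ k = real (cnt (Suc m) k + cnt m k)" by (simp add: G_nth)
      also have "\<dots> = (\<Sum>i=0..m. real (m choose i) *
          (if k < m - i then 0 else 2 ^ (k - (m - i)) * real (cnt i (k - (m - i)))))"
        unfolding cnt_rec_reflected of_nat_sum by (rule sum.cong[OF refl]) (auto simp: not_less)
      also have "\<dots> = (\<Sum>i=0..m. ydil (G $ i) * (of_nat (m choose i) * fps_X ^ (m - i))) $ k"
        by (simp add: fps_sum_nth ydil_mult_monom_nth G_nth cong: if_cong)
      finally show "(G $ Suc m + G $ m) $ k =
          (\<Sum>i=0..m. ydil (G $ i) * (of_nat (m choose i) * fps_X ^ (m - i))) $ k" .
    qed
    moreover have "((1 + zv) * G) $ n = G $ Suc m + G $ m"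
      using Suc by (simp add: algebra_simps)
    moreover have "(1 + zv * (sigma G * geom)) $ n =
        (\<Sum>i=0..m. ydil (G $ i) * (of_nat (m choose i) * fps_X ^ (m - i)))"
      using Suc by (simp add: sigma_mult_geom_nth)
    ultimately show ?thesis by simp
  qed
qed

section \<open>The closed form\<close>

definition ydil_coeffs :: "real fps fps \<Rightarrow> real fps fps" where
  "ydil_coeffs F = Abs_fps (\<lambda>n. ydil (F $ n))"

lemma ydil_mult: "ydil (p * q) = ydil p * ydil q"
  unfolding ydil_def by (rule fps_compose_mult_distrib) simp

lemma ydil_sum: "ydil (sum f A) = (\<Sum>i\<in>A. ydil (f i))"
  unfolding ydil_def by (rule fps_compose_sum_distrib)

lemma ydil_coeffs_mult: "ydil_coeffs (F * H) = ydil_coeffs F * ydil_coeffs H"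
  by (rule fps_ext) (simp add: ydil_coeffs_def fps_mult_nth ydil_sum ydil_mult)

lemma ydil_coeffs_add: "ydil_coeffs (F + H) = ydil_coeffs F + ydil_coeffs H"
  by (rule fps_ext) (simp add: ydil_coeffs_def ydil_def fps_compose_add_distrib)

lemma ydil_coeffs_diff: "ydil_coeffs (F - H) = ydil_coeffs F - ydil_coeffs H"
  by (rule fps_ext) (simp add: ydil_coeffs_def ydil_def fps_compose_sub_distrib)

lemma ydil_coeffs_const: "ydil_coeffs (fps_const p) = fps_const (ydil p)"
  by (rule fps_ext) (simp add: ydil_coeffs_def ydil_def)

lemma ydil_coeffs_zv: "ydil_coeffs zv = zv"
  by (rule fps_ext) (simp add: ydil_coeffs_def ydil_def)

lemma ydil_coeffs_sum: "ydil_coeffs (sum f A) = (\<Sum>i\<in>A. ydil_coeffs (f i))"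
  by (rule fps_ext) (simp add: ydil_coeffs_def fps_sum_nth ydil_sum)

lemma sigma_eq_compose: "sigma F = ydil_coeffs F oo zsub"
  by (simp add: sigma_def subst2_def ydil_coeffs_def ydil_def)

lemma sigma_mult: "sigma (F * H) = sigma F * sigma H"
  unfolding sigma_eq_compose ydil_coeffs_mult by (rule fps_compose_mult_distrib[OF zsub_nth_0])

lemma sigma_add: "sigma (F + H) = sigma F + sigma H"
  unfolding sigma_eq_compose ydil_coeffs_add by (rule fps_compose_add_distrib)

lemma sigma_diff: "sigma (F - H) = sigma F - sigma H"
  unfolding sigma_eq_compose ydil_coeffs_diff by (rule fps_compose_sub_distrib)

lemma sigma_sum: "sigma (sum f A) = (\<Sum>i\<in>A. sigma (f i))"
  unfolding sigma_eq_compose ydil_coeffs_sum by (rule fps_compose_sum_distrib)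

lemma sigma_const: "sigma (fps_const p) = fps_const (ydil p)"
  unfolding sigma_eq_compose ydil_coeffs_const by simp

lemma sigma_1: "sigma 1 = 1"
  using sigma_const[of 1] by (simp add: ydil_def)

lemma sigma_power: "sigma (F ^ k) = sigma F ^ k"
  by (induction k) (simp_all add: sigma_1 sigma_mult)

lemma sigma_zv: "sigma zv = zsub"
  unfolding sigma_eq_compose ydil_coeffs_zv using zsub_nth_0 by simp

lemma sigma_yv: "sigma yv = 2 * yv"
  using sigma_const[of fps_X] by (simp add: ydil_def numeral_fps_const)

lemma sigma_inverse:
  assumes "f $ 0 = 1" and "sigma f * u = f"
  shows "sigma (inverse f) = u * inverse f"
proof -
  have inv: "f * inverse f = 1"
    by (rule fps_mult_inverse_eq_one[OF assms(1)])
  then have sigma_inv: "sigma f * sigma (inverse f) = 1"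
    by (metis sigma_mult sigma_1)
  have "sigma (inverse f) = sigma (inverse f) * (sigma f * u * inverse f)"
    using inv assms(2) by simp
  also have "\<dots> = (sigma f * sigma (inverse f)) * (u * inverse f)"
    by (simp only: mult_ac)
  finally show ?thesis
    by (simp only: sigma_inv mult_1_left)
qed

definition factor :: "nat \<Rightarrow> real fps fps" where
  "factor i = 1 - (of_nat (2 ^ i) - 1 - yv) * zv"

definition denom :: "nat \<Rightarrow> real fps fps" where
  "denom k = (\<Prod>i=1..k. factor i)"

definition summand :: "nat \<Rightarrow> real fps fps" where
  "summand k = (zv * yv) ^ k * inverse (denom k)"

lemma denom_Suc: "denom (Suc k) = denom k * factor (Suc k)"
  by (simp add: denom_def)

lemma denom_nth_0: "denom k $ 0 = 1"
  by (induction k) (simp_all add: denom_def denom_Suc factor_def)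

lemma inverse_denom_Suc: "inverse (denom k) = inverse (denom (Suc k)) * factor (Suc k)"
proof -
  have "inverse (denom (Suc k)) * factor (Suc k) =
      inverse (denom (Suc k)) * factor (Suc k) * (denom k * inverse (denom k))"
    using fps_mult_inverse_eq_one[OF denom_nth_0] by simp
  also have "\<dots> = (denom (Suc k) * inverse (denom (Suc k))) * inverse (denom k)"
    by (simp add: denom_Suc mult_ac)
  finally show ?thesis
    using fps_mult_inverse_eq_one[OF denom_nth_0] by simp
qed

lemma sum_telescope:
  "(\<Sum>k<Suc N. (zv * yv) ^ k * (1 - (of_nat (2 ^ k) - 1) * zv) * inverse (denom k))
     = 1 + zv * yv - (zv * yv) ^ Suc N * inverse (denom N)"
proof (induction N)
  case 0
  have "inverse (denom 0) = 1"
    by (simp add: denom_def fps_inverse_one')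
  then show ?case by simp
next
  case (Suc N)
  have "(1 - (of_nat (2 ^ Suc N) - 1) * zv) * inverse (denom (Suc N)) =
      inverse (denom N) - zv * yv * inverse (denom (Suc N))"
    unfolding inverse_denom_Suc[of N] factor_def by (simp add: algebra_simps)
  then have "(zv * yv) ^ Suc N * (1 - (of_nat (2 ^ Suc N) - 1) * zv) * inverse (denom (Suc N))
      = (zv * yv) ^ Suc N * inverse (denom N) - (zv * yv) ^ Suc (Suc N) * inverse (denom (Suc N))"
    by (metis (no_types, lifting) mult.assoc power_Suc2 right_diff_distrib)
  then show ?case
    by (simp only: sum.lessThan_Suc[of _ "Suc N"] Suc.IH) simp
qed

lemma sigma_numeral: "sigma (numeral c) = numeral c"
  using sigma_const[of "numeral c"] by (simp add: numeral_fps_const ydil_def)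

lemma sigma_factor: "sigma (factor i) * (1 - zv * yv) = factor i"
proof -
  have sigma_factor: "sigma (factor i) = 1 - (of_nat (2 ^ i) - 1 - 2 * yv) * (zv * geom)"
    by (simp add: factor_def sigma_diff sigma_1 sigma_mult sigma_yv sigma_zv zsub_def
        sigma_power sigma_numeral)
  have "sigma (factor i) * (1 - zv * yv) =
      (1 - zv * yv) - (of_nat (2 ^ i) - 1 - 2 * yv) * zv * (geom * (1 - zv * yv))"
    unfolding sigma_factor by (simp add: algebra_simps)
  also have "\<dots> = (1 - zv * yv) - (of_nat (2 ^ i) - 1 - 2 * yv) * zv"
    by (simp only: geom_mult mult_1_right)
  also have "\<dots> = factor i"
    unfolding factor_def by (simp add: algebra_simps)
  finally show ?thesis .
qed

lemma sigma_denom: "sigma (denom k) * (1 - zv * yv) ^ k = denom k"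
proof (induction k)
  case 0
  then show ?case by (simp add: denom_def sigma_1)
next
  case (Suc k)
  have "sigma (denom (Suc k)) * (1 - zv * yv) ^ Suc k =
      (sigma (denom k) * (1 - zv * yv) ^ k) * (sigma (factor (Suc k)) * (1 - zv * yv))"
    by (simp add: denom_Suc sigma_mult mult_ac)
  then show ?case
    by (simp add: Suc.IH sigma_factor denom_Suc)
qed

lemma sigma_summand: "sigma (summand k) = 2 ^ k * summand k"
proof -
  have "sigma (summand k) = (zv * geom * (2 * yv)) ^ k * ((1 - zv * yv) ^ k * inverse (denom k))"
    by (simp add: summand_def sigma_mult sigma_power sigma_zv sigma_yv zsub_def
        sigma_inverse[OF denom_nth_0 sigma_denom])
  also have "\<dots> = 2 ^ k * summand k * (geom * (1 - zv * yv)) ^ k"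
    by (simp add: summand_def power_mult_distrib mult_ac)
  finally show ?thesis
    by (simp add: geom_mult)
qed

lemma sigma_inverse_one_plus_zy:
  "sigma (inverse (1 + zv * yv)) = (1 - zv * yv) * inverse (1 + zv * yv)"
proof (rule sigma_inverse)
  have "sigma (1 + zv * yv) = 1 + zv * geom * (2 * yv)"
    by (simp add: sigma_add sigma_1 sigma_mult sigma_zv sigma_yv zsub_def)
  then have "sigma (1 + zv * yv) * (1 - zv * yv) = (1 - zv * yv) + 2 * zv * yv * (geom * (1 - zv * yv))"
    by (simp add: algebra_simps)
  also have "\<dots> = 1 + zv * yv"
    by (simp add: geom_mult)
  finally show "sigma (1 + zv * yv) * (1 - zv * yv) = 1 + zv * yv" .
qed simp

definition func_op :: "real fps fps \<Rightarrow> real fps fps" where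
  "func_op H = (1 + zv) * H - zv * (sigma H * geom)"

lemma func_op_G: "func_op G = 1"
  using G_functional_equation by (simp add: func_op_def)

lemma func_op_diff: "func_op (F - H) = func_op F - func_op H"
  by (simp add: func_op_def sigma_diff algebra_simps)

text \<open>The coefficient \<open>func_op H $ (m+1)\<close> is \<open>H $ (m+1)\<close> plus a term depending only
  on \<open>H $ 0, \<dots>, H $ m\<close>.\<close>
lemma func_op_coeffs_zero_imp:
  assumes "\<And>m. m < N \<Longrightarrow> func_op H $ m = 0" and "n < N"
  shows "H $ n = 0"
  using assms(2)
proof (induction n rule: less_induct)
  case (less n)
  show ?case
  proof (cases n)
    case 0
    then show ?thesis using assms(1)[of 0] less.prems by (simp add: func_op_def algebra_simps)
  next
    case (Suc m)
    have below: "H $ i = 0" if "i \<le> m" for i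
      using less.IH[of i] Suc that less.prems by auto
    have "(sigma H * geom) $ m = 0"
      unfolding sigma_mult_geom_nth using below by (simp add: ydil_def)
    moreover have "func_op H $ n = H $ Suc m + H $ m - (sigma H * geom) $ m"
      using Suc by (simp add: func_op_def distrib_right)
    ultimately show ?thesis
      using assms(1)[of n] less.prems Suc below[of m] by simp
  qed
qed

definition partial_sum :: "nat \<Rightarrow> real fps fps" where
  "partial_sum M = inverse (1 + zv * yv) * (\<Sum>k<M. summand k)"

lemma sigma_partial_sum_mult_geom:
  "sigma (partial_sum M) * geom = inverse (1 + zv * yv) * (\<Sum>k<M. 2 ^ k * summand k)"
proof -
  have "sigma (partial_sum M) = (1 - zv * yv) * inverse (1 + zv * yv) * (\<Sum>k<M. 2 ^ k * summand k)"
    by (simp add: partial_sum_def sigma_mult sigma_sum sigma_summand sigma_inverse_one_plus_zy)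
  then have "sigma (partial_sum M) * geom =
      (geom * (1 - zv * yv)) * inverse (1 + zv * yv) * (\<Sum>k<M. 2 ^ k * summand k)"
    by (simp add: mult_ac)
  then show ?thesis
    by (simp add: geom_mult)
qed

lemma func_op_partial_sum:
  "func_op (partial_sum (Suc N)) = 1 - inverse (1 + zv * yv) * ((zv * yv) ^ Suc N * inverse (denom N))"
proof -
  let ?I = "inverse (1 + zv * yv)"
  let ?T = "\<Sum>k<Suc N. summand k" and ?T2 = "\<Sum>k<Suc N. 2 ^ k * summand k"
  have I: "?I * (1 + zv * yv) = 1"
    using fps_mult_inverse_eq_one[of "1 + zv * yv"] by (simp add: mult.commute)
  have factor_out: "(1 + z) * (i * t) - z * (i * t2) = i * ((1 + z) * t - z * t2)"
    for z i t t2 :: "real fps fps"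
    by (simp add: algebra_simps)
  have "func_op (partial_sum (Suc N)) = ?I * ((1 + zv) * ?T - zv * ?T2)"
    unfolding func_op_def sigma_partial_sum_mult_geom unfolding partial_sum_def by (rule factor_out)
  also have "(1 + zv) * ?T - zv * ?T2 = (\<Sum>k<Suc N. (1 + zv) * summand k - zv * (2 ^ k * summand k))"
    by (simp only: sum_distrib_left sum_subtractf)
  also have "\<dots> = (\<Sum>k<Suc N. (zv * yv) ^ k * (1 - (of_nat (2 ^ k) - 1) * zv) * inverse (denom k))"
  proof (rule sum.cong[OF refl])
    fix k
    have collect: "(1 + zv) * t - zv * (c * t) = (1 - (c - 1) * zv) * t" for c t :: "real fps fps"
      by (simp add: algebra_simps)
    show "(1 + zv) * summand k - zv * (2 ^ k * summand k) =
        (zv * yv) ^ k * (1 - (of_nat (2 ^ k) - 1) * zv) * inverse (denom k)"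
      unfolding collect by (simp add: summand_def mult_ac)
  qed
  also have "?I * \<dots> = ?I * (1 + zv * yv) - ?I * ((zv * yv) ^ Suc N * inverse (denom N))"
    unfolding sum_telescope by (rule right_diff_distrib)
  finally show ?thesis
    by (simp only: I)
qed

lemma G_nth_eq_partial_sum_nth:
  assumes "n \<le> N"
  shows "G $ n = partial_sum (Suc N) $ n"
proof -
  have "func_op (G - partial_sum (Suc N)) = inverse (1 + zv * yv) * ((zv * yv) ^ Suc N * inverse (denom N))"
    by (simp only: func_op_diff func_op_G func_op_partial_sum diff_diff_eq2 add_diff_cancel_left')
  also have "\<dots> = zv ^ Suc N * (inverse (1 + zv * yv) * yv ^ Suc N * inverse (denom N))"
    by (simp only: power_mult_distrib mult_ac)
  finally have defect: "func_op (G - partial_sum (Suc N)) = \<dots>" .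
  have "func_op (G - partial_sum (Suc N)) $ m = 0" if "m < Suc N" for m
    using that unfolding defect fps_X_power_mult_nth by simp
  moreover have "n < Suc N"
    using assms by simp
  ultimately have "(G - partial_sum (Suc N)) $ n = 0"
    by (rule func_op_coeffs_zero_imp)
  then show ?thesis by simp
qed

lemma suminf_fps_nth:
  fixes u :: "nat \<Rightarrow> 'a::comm_ring_1 fps"
  assumes "\<And>k n. n < k \<Longrightarrow> u k $ n = 0" and "n < N"
  shows "(\<Sum>k. u k) $ n = (\<Sum>k<N. u k) $ n"
proof -
  define L where "L = Abs_fps (\<lambda>n. \<Sum>k<Suc n. u k $ n)"
  have partial: "(\<Sum>k<M. u k) $ m = (\<Sum>k<Suc m. u k $ m)" if "m < M" for M m
    unfolding fps_sum_nth by (rule sum.mono_neutral_right) (use that assms(1) in auto)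
  have "u sums L"
    unfolding sums_def
  proof (rule tendsto_fpsI)
    fix m
    show "eventually (\<lambda>M. (\<Sum>k<M. u k) $ m = L $ m) sequentially"
      by (rule eventually_sequentiallyI[of "Suc m"]) (simp add: partial L_def)
  qed
  then show ?thesis
    using partial[OF assms(2)] by (simp add: sums_unique[symmetric] L_def)
qed

lemma fps_mult_nth_cong:
  assumes "\<And>j. j \<le> n \<Longrightarrow> g $ j = h $ j"
  shows "(f * g) $ n = (f * h) $ n"
  unfolding fps_mult_nth using assms by (intro sum.cong) auto

lemma G_closed_form: "G = inverse (1 + zv * yv) * (\<Sum>k. summand k)"
proof (rule fps_ext)
  fix n
  have "summand k $ n = 0" if "n < k" for k n
    using that by (simp add: summand_def power_mult_distrib mult.assoc fps_X_power_mult_nth)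
  then have "(\<Sum>k. summand k) $ j = (\<Sum>k<Suc n. summand k) $ j" if "j \<le> n" for j
    using that by (intro suminf_fps_nth) auto
  then show "G $ n = (inverse (1 + zv * yv) * (\<Sum>k. summand k)) $ n"
    unfolding G_nth_eq_partial_sum_nth[OF order_refl] partial_sum_def
    by (intro fps_mult_nth_cong) simp
qed

lemma G_recursive_form:
  "(1 - zv^2 * yv^2) * G = 1 - zv * yv + zv * (sigma G - (1 - yv) * (1 - zv * yv) * G)"
proof -
  have rearrange: "(1 - x^2 * y^2) * g = 1 - x * y + x * (s - (1 - y) * (1 - x * y) * g)"
    if "x * s = ((1 + x) * g - 1) * (1 - x * y)" for x y s g :: "real fps fps"
  proof -
    have "1 - x * y + x * (s - (1 - y) * (1 - x * y) * g) = 1 - x * y + x * s - x * ((1 - y) * (1 - x * y) * g)"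
      by (simp add: algebra_simps)
    also have "\<dots> = (1 - x^2 * y^2) * g"
      unfolding that by (simp add: algebra_simps power2_eq_square)
    finally show ?thesis ..
  qed
  have "zv * sigma G = zv * sigma G * (geom * (1 - zv * yv))"
    by (simp add: geom_mult)
  also have "\<dots> = ((1 + zv) * G - 1) * (1 - zv * yv)"
    by (simp only: G_functional_equation mult.assoc[symmetric] add_diff_cancel_left')
  finally show ?thesis
    by (rule rearrange)
qed

theorem proposition5:
  shows "G = inverse (1 - zv^2 * yv^2) *
             (1 - zv * yv + zv * (subst2 G (zv * inverse (1 - zv * yv)) 2
                                  - (1 - yv) * (1 - zv * yv) * G))
       \<and> G = inverse (1 + zv * yv) *
             (\<Sum>k. zv^k * yv^k *
                  inverse (\<Prod>i=1..k. 1 - (of_nat (2^i) - 1 - yv) * zv))"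
proof
  have "(1 - zv^2 * yv^2 :: real fps fps) $ 0 = 1"
    by (simp add: power2_eq_square)
  then have "inverse (1 - zv^2 * yv^2) * (1 - zv^2 * yv^2) = 1"
    using fps_mult_inverse_eq_one[of "1 - zv^2 * yv^2"] by (simp only: mult.commute)
  then have "G = inverse (1 - zv^2 * yv^2) * ((1 - zv^2 * yv^2) * G)"
    by (simp only: mult.assoc[symmetric] mult_1_left)
  then show "G = inverse (1 - zv^2 * yv^2) *
      (1 - zv * yv + zv * (subst2 G (zv * inverse (1 - zv * yv)) 2 - (1 - yv) * (1 - zv * yv) * G))"
    by (simp only: G_recursive_form sigma_def zsub_def geom_def)
next
  show "G = inverse (1 + zv * yv) *
      (\<Sum>k. zv^k * yv^k * inverse (\<Prod>i=1..k. 1 - (of_nat (2^i) - 1 - yv) * zv))"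
    using G_closed_form by (simp only: summand_def denom_def factor_def power_mult_distrib)
qed

end
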